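(* Let $A$ and $B$ be categories with variances, let $(R_1,L_1)$ be a span on $A$ and $(R_2,L_2)$ a span on $B$, and let $F\colon A\times B\rightarrow C$ be a functor of variance with respect to the product variance on $A\times B$. Let $L=L_1\times L_2\colon R_1\times R_2\rightarrow A\times B$. Assume that for every object $b$ of $B$ the end $\int_{L_1}F^b$ exists with universal wedge $\omega^b=(\omega^b_x\colon\int_{L_1}F^b\rightarrow F(L_1(x),b))_{x\in R_1}$, and let $\int_{L_1}F\colon B\rightarrow C$ be the unique functor of variance with $(\int_{L_1}F)(b)=\int_{L_1}F^b$ on objects and satisfying $F(id_{L_1(x)},g)\circ\omega^{g_s}_x=\omega^{g_t}_x\circ(\int_{L_1}F)(g)$ for all objects $x$ of $R_1$ and morphisms $g$ of $B$. Then the assignment $$(c,\theta)\mapsto (c,\tilde\theta),\qquad \tilde\theta_{x,y}=\omega^{L_2(y)}_x\circ\theta_y\ \ \text{for objects } (x,y) \text{ of } R_1\times R_2,$$ (acting as the identity on underlying morphisms) defines an isomorphism between the category of $L_2$-wedges of $\int_{L_1}F$ and the category of $L$-wedges of $F$. In particular, the end $\int_L F$ exists if and only if the end $\int_{L_2}\int_{L_1}F$ exists, and if one exists, they agree.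
   Context: A variance on a category $A$ is a pair $(E,M)$ of subcategories containing all objects such that every morphism $f$ factors uniquely as $f=me$ and uniquely as $f=e'm'$ with $e,e'$ in $E$ (covariant morphisms) and $m,m'$ in $M$ (contravariant morphisms). For $f\colon x\rightarrow y$ write $f=f^mf^e$ with $f^e\colon x\rightarrow f_t$ in $E$, $f^m\colon f_t\rightarrow y$ in $M$, and $f=f_ef_m$ with $f_m\colon x\rightarrow f_s$ in $M$, $f_e\colon f_s\rightarrow y$ in $E$. A functor $F\colon A\rightarrow C$ of variance $(E,M)$ assigns objects to objects and to each morphism $f$ a morphism $F(f)\colon F(f_s)\rightarrow F(f_t)$, preserving identities and satisfying, for composable $x\xrightarrow{f}y\xrightarrow{g}z$, $F(gf)=F((g^ef^m)^e)F(f)F((g_mf_e)_m)=F((g^ef^m)^m)F(g)F((g_mf_e)_e)$. The product variance on $A\times B$: a morphism $(f,g)$ is covariant (resp. contravariant) iff $f$ and $g$ both are. For $F\colon A\times B\rightarrow C$ of variance and an object $b$ of $B$, $F^b\colon A\rightarrow C$ is the functor of variance $F^b(x)=F(x,b)$, $F^b(f)=F(f,id_b)$. A span on $A$ is a pair $(R,L)$ of a category $R$ and a functor $L\colon R\rightarrow A$. For a functor of variance $G\colon A\rightarrow C$, an $L$-wedge of $G$ is a pair $(c,\eta)$ with $c$ an object of $C$ and $\eta=(\eta_x\colon c\rightarrow G(Lx))_{x\in R}$ satisfying $G(L(f)^e)\eta_x=G(L(f)^m)\eta_y$ for every morphism $f\colon x\rightarrow y$ of $R$; a morphism $(c,\eta)\rightarrow(d,\theta)$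 of $L$-wedges is a morphism $h\colon c\rightarrow d$ of $C$ with $\theta_x h=\eta_x$ for all $x$. The end $\int_L G$ is a terminal $L$-wedge, whose family is called the universal wedge. *)

theory Defs
  imports "HOL-Library.FuncSet"
begin

record ('o,'a) cat =
  Obj :: "'o set"
  Arr :: "'a set"
  Dom :: "'a \<Rightarrow> 'o"
  Cod :: "'a \<Rightarrow> 'o"
  Id  :: "'o \<Rightarrow> 'a"
  Comp :: "'a \<Rightarrow> 'a \<Rightarrow> 'a"   (* Comp C g f = g o f *)

definition hom :: "('o,'a,'z) cat_scheme \<Rightarrow> 'o \<Rightarrow> 'o \<Rightarrow> 'a set" where
  "hom C x y = {f \<in> Arr C. Dom C f = x \<and> Cod C f = y}"

definition is_cat :: "('o,'a,'z) cat_scheme \<Rightarrow> bool" where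
  "is_cat C \<longleftrightarrow>
     (\<forall>f\<in>Arr C. Dom C f \<in> Obj C \<and> Cod C f \<in> Obj C) \<and>
     (\<forall>x\<in>Obj C. Id C x \<in> hom C x x) \<and>
     (\<forall>f\<in>Arr C. \<forall>g\<in>Arr C. Cod C f = Dom C g \<longrightarrow> Comp C g f \<in> hom C (Dom C f) (Cod C g)) \<and>
     (\<forall>f\<in>Arr C. Comp C (Id C (Cod C f)) f = f \<and> Comp C f (Id C (Dom C f)) = f) \<and>
     (\<forall>f\<in>Arr C. \<forall>g\<in>Arr C. \<forall>h\<in>Arr C. Cod C f = Dom C g \<longrightarrow> Cod C g = Dom C h \<longrightarrow>
        Comp C h (Comp C g f) = Comp C (Comp C h g) f)"

definition is_functor :: "('o1,'a1,'z1) cat_scheme \<Rightarrow> ('o2,'a2,'z2) cat_scheme \<Rightarrow>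
    ('o1 \<Rightarrow> 'o2) \<Rightarrow> ('a1 \<Rightarrow> 'a2) \<Rightarrow> bool" where
  "is_functor A B Fo Fa \<longleftrightarrow>
     (\<forall>x\<in>Obj A. Fo x \<in> Obj B) \<and>
     (\<forall>f\<in>Arr A. Fa f \<in> hom B (Fo (Dom A f)) (Fo (Cod A f))) \<and>
     (\<forall>x\<in>Obj A. Fa (Id A x) = Id B (Fo x)) \<and>
     (\<forall>f\<in>Arr A. \<forall>g\<in>Arr A. Cod A f = Dom A g \<longrightarrow> Fa (Comp A g f) = Comp B (Fa g) (Fa f))"

definition is_cat_iso :: "('o1,'a1,'z1) cat_scheme \<Rightarrow> ('o2,'a2,'z2) cat_scheme \<Rightarrow>
    ('o1 \<Rightarrow> 'o2) \<Rightarrow> ('a1 \<Rightarrow> 'a2) \<Rightarrow> bool" where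
  "is_cat_iso A B Fo Fa \<longleftrightarrow> is_functor A B Fo Fa \<and>
     bij_betw Fo (Obj A) (Obj B) \<and> bij_betw Fa (Arr A) (Arr B)"

definition prod_cat :: "('o1,'a1,'z1) cat_scheme \<Rightarrow> ('o2,'a2,'z2) cat_scheme \<Rightarrow>
    ('o1 \<times> 'o2, 'a1 \<times> 'a2) cat" where
  "prod_cat A B = \<lparr> Obj = Obj A \<times> Obj B, Arr = Arr A \<times> Arr B,
     Dom = (\<lambda>(f,g). (Dom A f, Dom B g)), Cod = (\<lambda>(f,g). (Cod A f, Cod B g)),
     Id = (\<lambda>(x,y). (Id A x, Id B y)),
     Comp = (\<lambda>(f',g') (f,g). (Comp A f' f, Comp B g' g)) \<rparr>"

text \<open>A category with a distinguished pair (Cov, Con) = (E, M).\<close>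
record ('o,'a) vcat = "('o,'a) cat" +
  Cov :: "'a set"
  Con :: "'a set"

definition is_subcat_all_obj :: "('o,'a,'z) cat_scheme \<Rightarrow> 'a set \<Rightarrow> bool" where
  "is_subcat_all_obj C S \<longleftrightarrow> S \<subseteq> Arr C \<and> (\<forall>x\<in>Obj C. Id C x \<in> S) \<and>
     (\<forall>f\<in>S. \<forall>g\<in>S. Cod C f = Dom C g \<longrightarrow> Comp C g f \<in> S)"

definition is_variance :: "('o,'a,'z) vcat_scheme \<Rightarrow> bool" where
  "is_variance C \<longleftrightarrow> is_cat C \<and> is_subcat_all_obj C (Cov C) \<and> is_subcat_all_obj C (Con C) \<and>
     (\<forall>f\<in>Arr C. \<exists>!p. fst p \<in> Con C \<and> snd p \<in> Cov C \<and> Cod C (snd p) = Dom C (fst p)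
                      \<and> Comp C (fst p) (snd p) = f) \<and>
     (\<forall>f\<in>Arr C. \<exists>!p. fst p \<in> Cov C \<and> snd p \<in> Con C \<and> Cod C (snd p) = Dom C (fst p)
                      \<and> Comp C (fst p) (snd p) = f)"

definition vfac1 :: "('o,'a,'z) vcat_scheme \<Rightarrow> 'a \<Rightarrow> 'a \<times> 'a" where
  "vfac1 C f = (THE p. fst p \<in> Con C \<and> snd p \<in> Cov C \<and> Cod C (snd p) = Dom C (fst p)
                      \<and> Comp C (fst p) (snd p) = f)"
definition vfac2 :: "('o,'a,'z) vcat_scheme \<Rightarrow> 'a \<Rightarrow> 'a \<times> 'a" where
  "vfac2 C f = (THE p. fst p \<in> Cov C \<and> snd p \<in> Con C \<and> Cod C (snd p) = Dom C (fst p)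
                      \<and> Comp C (fst p) (snd p) = f)"

definition upE :: "('o,'a,'z) vcat_scheme \<Rightarrow> 'a \<Rightarrow> 'a" where "upE C f = snd (vfac1 C f)"
definition upM :: "('o,'a,'z) vcat_scheme \<Rightarrow> 'a \<Rightarrow> 'a" where "upM C f = fst (vfac1 C f)"
definition loE :: "('o,'a,'z) vcat_scheme \<Rightarrow> 'a \<Rightarrow> 'a" where "loE C f = fst (vfac2 C f)"
definition loM :: "('o,'a,'z) vcat_scheme \<Rightarrow> 'a \<Rightarrow> 'a" where "loM C f = snd (vfac2 C f)"
definition vtgt :: "('o,'a,'z) vcat_scheme \<Rightarrow> 'a \<Rightarrow> 'o" where "vtgt C f = Cod C (upE C f)"
definition vsrc :: "('o,'a,'z) vcat_scheme \<Rightarrow> 'a \<Rightarrow> 'o" where "vsrc C f = Cod C (loM C f)"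

definition prod_vcat :: "('o1,'a1,'z1) vcat_scheme \<Rightarrow> ('o2,'a2,'z2) vcat_scheme \<Rightarrow>
    ('o1 \<times> 'o2, 'a1 \<times> 'a2) vcat" where
  "prod_vcat A B = \<lparr> Obj = Obj A \<times> Obj B, Arr = Arr A \<times> Arr B,
     Dom = (\<lambda>(f,g). (Dom A f, Dom B g)), Cod = (\<lambda>(f,g). (Cod A f, Cod B g)),
     Id = (\<lambda>(x,y). (Id A x, Id B y)),
     Comp = (\<lambda>(f',g') (f,g). (Comp A f' f, Comp B g' g)),
     Cov = Cov A \<times> Cov B, Con = Con A \<times> Con B \<rparr>"

definition is_vfunctor :: "('o1,'a1,'z1) vcat_scheme \<Rightarrow> ('o2,'a2,'z2) cat_scheme \<Rightarrow>
    ('o1 \<Rightarrow> 'o2) \<Rightarrow> ('a1 \<Rightarrow> 'a2) \<Rightarrow> bool" where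
  "is_vfunctor A C Fo Fa \<longleftrightarrow>
     (\<forall>x\<in>Obj A. Fo x \<in> Obj C) \<and>
     (\<forall>f\<in>Arr A. Fa f \<in> hom C (Fo (vsrc A f)) (Fo (vtgt A f))) \<and>
     (\<forall>x\<in>Obj A. Fa (Id A x) = Id C (Fo x)) \<and>
     (\<forall>f\<in>Arr A. \<forall>g\<in>Arr A. Cod A f = Dom A g \<longrightarrow>
        Fa (Comp A g f) =
          Comp C (Fa (upE A (Comp A (upE A g) (upM A f))))
            (Comp C (Fa f) (Fa (loM A (Comp A (loM A g) (loE A f))))) \<and>
        Fa (Comp A g f) =
          Comp C (Fa (upM A (Comp A (upE A g) (upM A f))))
            (Comp C (Fa g) (Fa (loE A (Comp A (loM A g) (loE A f))))))"

definition is_wedge :: "('o,'a,'z) vcat_scheme \<Rightarrow> ('oc,'ac,'zc) cat_scheme \<Rightarrow>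
    ('o \<Rightarrow> 'oc) \<Rightarrow> ('a \<Rightarrow> 'ac) \<Rightarrow> ('r,'b,'zr) cat_scheme \<Rightarrow> ('r \<Rightarrow> 'o) \<Rightarrow> ('b \<Rightarrow> 'a) \<Rightarrow>
    'oc \<Rightarrow> ('r \<Rightarrow> 'ac) \<Rightarrow> bool" where
  "is_wedge A C Go Ga R Lo La c \<eta> \<longleftrightarrow> c \<in> Obj C \<and>
     (\<forall>x\<in>Obj R. \<eta> x \<in> hom C c (Go (Lo x))) \<and>
     (\<forall>f\<in>Arr R. Comp C (Ga (upE A (La f))) (\<eta> (Dom R f)) = Comp C (Ga (upM A (La f))) (\<eta> (Cod R f)))"

definition wedge_morph :: "('oc,'ac,'zc) cat_scheme \<Rightarrow> ('r,'b,'zr) cat_scheme \<Rightarrow>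
    'oc \<Rightarrow> ('r \<Rightarrow> 'ac) \<Rightarrow> 'oc \<Rightarrow> ('r \<Rightarrow> 'ac) \<Rightarrow> 'ac \<Rightarrow> bool" where
  "wedge_morph C R c \<eta> d \<theta> h \<longleftrightarrow> h \<in> hom C c d \<and> (\<forall>x\<in>Obj R. Comp C (\<theta> x) h = \<eta> x)"

text \<open>The category of L-wedges; a wedge family is taken extensional on the objects of R.\<close>
definition wedge_cat :: "('o,'a,'z) vcat_scheme \<Rightarrow> ('oc,'ac,'zc) cat_scheme \<Rightarrow>
    ('o \<Rightarrow> 'oc) \<Rightarrow> ('a \<Rightarrow> 'ac) \<Rightarrow> ('r,'b,'zr) cat_scheme \<Rightarrow> ('r \<Rightarrow> 'o) \<Rightarrow> ('b \<Rightarrow> 'a) \<Rightarrow>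
    ('oc \<times> ('r \<Rightarrow> 'ac), ('oc \<times> ('r \<Rightarrow> 'ac)) \<times> ('oc \<times> ('r \<Rightarrow> 'ac)) \<times> 'ac) cat" where
  "wedge_cat A C Go Ga R Lo La =
    (let W = {(c,\<eta>). is_wedge A C Go Ga R Lo La c \<eta> \<and> \<eta> \<in> extensional (Obj R)} in
     \<lparr> Obj = W,
       Arr = {(v,w,h). v \<in> W \<and> w \<in> W \<and> wedge_morph C R (fst v) (snd v) (fst w) (snd w) h},
       Dom = (\<lambda>(v,w,h). v), Cod = (\<lambda>(v,w,h). w),
       Id = (\<lambda>v. (v, v, Id C (fst v))),
       Comp = (\<lambda>(v',w',k) (v,w,h). (v, w', Comp C k h)) \<rparr>)"

definition is_end :: "('o,'a,'z) vcat_scheme \<Rightarrow> ('oc,'ac,'zc) cat_scheme \<Rightarrow>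
    ('o \<Rightarrow> 'oc) \<Rightarrow> ('a \<Rightarrow> 'ac) \<Rightarrow> ('r,'b,'zr) cat_scheme \<Rightarrow> ('r \<Rightarrow> 'o) \<Rightarrow> ('b \<Rightarrow> 'a) \<Rightarrow>
    'oc \<Rightarrow> ('r \<Rightarrow> 'ac) \<Rightarrow> bool" where
  "is_end A C Go Ga R Lo La c \<eta> \<longleftrightarrow> is_wedge A C Go Ga R Lo La c \<eta> \<and>
     (\<forall>d \<theta>. is_wedge A C Go Ga R Lo La d \<theta> \<longrightarrow> (\<exists>!h. wedge_morph C R d \<theta> c \<eta> h))"

definition has_end :: "('o,'a,'z) vcat_scheme \<Rightarrow> ('oc,'ac,'zc) cat_scheme \<Rightarrow>
    ('o \<Rightarrow> 'oc) \<Rightarrow> ('a \<Rightarrow> 'ac) \<Rightarrow> ('r,'b,'zr) cat_scheme \<Rightarrow> ('r \<Rightarrow> 'o) \<Rightarrow> ('b \<Rightarrow> 'a) \<Rightarrow> bool" where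
  "has_end A C Go Ga R Lo La \<longleftrightarrow> (\<exists>c \<eta>. is_end A C Go Ga R Lo La c \<eta>)"

definition tilde_fam :: "('oc,'ac,'zc) cat_scheme \<Rightarrow> ('r1,'b1,'z1) cat_scheme \<Rightarrow> ('r2,'b2,'z2) cat_scheme \<Rightarrow>
    ('r2 \<Rightarrow> 'ob) \<Rightarrow> ('ob \<Rightarrow> 'r1 \<Rightarrow> 'ac) \<Rightarrow> ('r2 \<Rightarrow> 'ac) \<Rightarrow> ('r1 \<times> 'r2 \<Rightarrow> 'ac)" where
  "tilde_fam C R1 R2 L2o \<omega> \<theta> =
     restrict (\<lambda>(x,y). Comp C (\<omega> (L2o y) x) (\<theta> y)) (Obj R1 \<times> Obj R2)"

definition tilde_obj where
  "tilde_obj C R1 R2 L2o \<omega> w = (fst w, tilde_fam C R1 R2 L2o \<omega> (snd w))"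

definition tilde_arr where
  "tilde_arr C R1 R2 L2o \<omega> a =
     (case a of (v,w,h) \<Rightarrow> (tilde_obj C R1 R2 L2o \<omega> v, tilde_obj C R1 R2 L2o \<omega> w, h))"

end

theory Submission
  imports Defs
begin

text \<open>
  An L-wedge (c, \<eta>) of F restricts, for each object y of R2, to an L1-wedge (c, \<eta>(-, y))
  of F^(L2 y), which factors uniquely through the end \<omega>^(L2 y). These factors form an
  L2-wedge of \<integral>_L1 F: its wedge condition may be checked after composing with the jointly
  monic family \<omega>^b, where naturality of \<omega> turns it into the wedge condition of \<eta> along
  the arrows (id, g). Conversely \<theta>~ is an L-wedge: F(e, e') = F(e, id) F(id, e') for
  covariant (dually, contravariant) pairs, naturality moves F(id, e') past \<omega>, and what is
  left are the wedge conditions of \<omega>^b and of \<theta> separately. Joint monicity of the \<omega>'s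
  makes the two constructions mutually inverse and identifies the wedge morphisms, so the
  wedge categories are isomorphic and their terminal objects, the ends, correspond.
\<close>

section \<open>Categories with variances\<close>

lemma cat_dom_obj: "is_cat C \<Longrightarrow> f \<in> Arr C \<Longrightarrow> Dom C f \<in> Obj C"
  and cat_cod_obj: "is_cat C \<Longrightarrow> f \<in> Arr C \<Longrightarrow> Cod C f \<in> Obj C"
  and cat_id_hom: "is_cat C \<Longrightarrow> x \<in> Obj C \<Longrightarrow> Id C x \<in> hom C x x"
  and cat_comp_id_left: "is_cat C \<Longrightarrow> f \<in> Arr C \<Longrightarrow> Comp C (Id C (Cod C f)) f = f"
  and cat_comp_id_right: "is_cat C \<Longrightarrow> f \<in> Arr C \<Longrightarrow> Comp C f (Id C (Dom C f)) = f"
  by (auto simp: is_cat_def)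

lemma cat_comp_hom: "is_cat C \<Longrightarrow> f \<in> hom C a b \<Longrightarrow> g \<in> hom C b c \<Longrightarrow> Comp C g f \<in> hom C a c"
  by (auto simp: is_cat_def hom_def)

lemma cat_comp_Arr:
  "is_cat C \<Longrightarrow> f \<in> Arr C \<Longrightarrow> g \<in> Arr C \<Longrightarrow> Cod C f = Dom C g \<Longrightarrow> Comp C g f \<in> Arr C"
  unfolding is_cat_def hom_def by blast

lemma cat_comp_assoc:
  "is_cat C \<Longrightarrow> f \<in> hom C a b \<Longrightarrow> g \<in> hom C b c \<Longrightarrow> h \<in> hom C c d \<Longrightarrow>
   Comp C h (Comp C g f) = Comp C (Comp C h g) f"
  by (auto simp: is_cat_def hom_def)

lemma functor_obj: "is_functor R A Lo La \<Longrightarrow> x \<in> Obj R \<Longrightarrow> Lo x \<in> Obj A"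
  and functor_hom: "is_functor R A Lo La \<Longrightarrow> f \<in> Arr R \<Longrightarrow> La f \<in> hom A (Lo (Dom R f)) (Lo (Cod R f))"
  and functor_Id: "is_functor R A Lo La \<Longrightarrow> x \<in> Obj R \<Longrightarrow> La (Id R x) = Id A (Lo x)"
  unfolding is_functor_def by blast+

lemma variance_is_cat: "is_variance D \<Longrightarrow> is_cat D"
  by (simp add: is_variance_def)

lemma Cov_Arr: "is_variance D \<Longrightarrow> e \<in> Cov D \<Longrightarrow> e \<in> Arr D"
  and Con_Arr: "is_variance D \<Longrightarrow> m \<in> Con D \<Longrightarrow> m \<in> Arr D"
  and Id_Cov: "is_variance D \<Longrightarrow> x \<in> Obj D \<Longrightarrow> Id D x \<in> Cov D"
  and Id_Con: "is_variance D \<Longrightarrow> x \<in> Obj D \<Longrightarrow> Id D x \<in> Con D"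
  by (auto simp: is_variance_def is_subcat_all_obj_def)

lemma vfac1_unique:
  assumes "is_variance D" "f \<in> Arr D"
    and "m \<in> Con D" "e \<in> Cov D" "Cod D e = Dom D m" "Comp D m e = f"
  shows "vfac1 D f = (m, e)"
  unfolding vfac1_def using assms by (intro the1_equality) (auto simp: is_variance_def)

lemma vfac2_unique:
  assumes "is_variance D" "f \<in> Arr D"
    and "e \<in> Cov D" "m \<in> Con D" "Cod D m = Dom D e" "Comp D e m = f"
  shows "vfac2 D f = (e, m)"
  unfolding vfac2_def using assms by (intro the1_equality) (auto simp: is_variance_def)

lemma upM_upE_factorization:
  assumes "is_variance D" "f \<in> Arr D"
  shows "upM D f \<in> Con D" "upE D f \<in> Cov D" "Cod D (upE D f) = Dom D (upM D f)"
    "Comp D (upM D f) (upE D f) = f"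
proof -
  have "\<exists>!p. fst p \<in> Con D \<and> snd p \<in> Cov D \<and> Cod D (snd p) = Dom D (fst p) \<and> Comp D (fst p) (snd p) = f"
    using assms by (simp add: is_variance_def)
  from theI'[OF this] show "upM D f \<in> Con D" "upE D f \<in> Cov D" "Cod D (upE D f) = Dom D (upM D f)"
    "Comp D (upM D f) (upE D f) = f"
    unfolding upM_def upE_def vfac1_def by simp_all
qed

lemma loE_loM_factorization:
  assumes "is_variance D" "f \<in> Arr D"
  shows "loE D f \<in> Cov D" "loM D f \<in> Con D" "Cod D (loM D f) = Dom D (loE D f)"
    "Comp D (loE D f) (loM D f) = f"
proof -
  have "\<exists>!p. fst p \<in> Cov D \<and> snd p \<in> Con D \<and> Cod D (snd p) = Dom D (fst p) \<and> Comp D (fst p) (snd p) = f"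
    using assms by (simp add: is_variance_def)
  from theI'[OF this] show "loE D f \<in> Cov D" "loM D f \<in> Con D" "Cod D (loM D f) = Dom D (loE D f)"
    "Comp D (loE D f) (loM D f) = f"
    unfolding loM_def loE_def vfac2_def by simp_all
qed

lemma upE_upM_Arr:
  assumes "is_variance D" "f \<in> Arr D"
  shows "upE D f \<in> Arr D" "upM D f \<in> Arr D" "Dom D (upE D f) = Dom D f" "Cod D (upM D f) = Cod D f"
proof -
  note fac = upM_upE_factorization[OF assms]
  show e: "upE D f \<in> Arr D" and m: "upM D f \<in> Arr D"
    using fac Cov_Arr[OF assms(1)] Con_Arr[OF assms(1)] by auto
  have "Comp D (upM D f) (upE D f) \<in> hom D (Dom D (upE D f)) (Cod D (upM D f))"
    using variance_is_cat[OF assms(1)] e m fac(3) by (auto simp: is_cat_def)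
  then show "Dom D (upE D f) = Dom D f" "Cod D (upM D f) = Cod D f"
    using fac(4) by (auto simp: hom_def)
qed

lemma loE_loM_Arr:
  assumes "is_variance D" "f \<in> Arr D"
  shows "loE D f \<in> Arr D" "loM D f \<in> Arr D" "Dom D (loM D f) = Dom D f" "Cod D (loE D f) = Cod D f"
proof -
  note fac = loE_loM_factorization[OF assms]
  show e: "loE D f \<in> Arr D" and m: "loM D f \<in> Arr D"
    using fac Cov_Arr[OF assms(1)] Con_Arr[OF assms(1)] by auto
  have "Comp D (loE D f) (loM D f) \<in> hom D (Dom D (loM D f)) (Cod D (loE D f))"
    using variance_is_cat[OF assms(1)] e m fac(3) by (auto simp: is_cat_def)
  then show "Dom D (loM D f) = Dom D f" "Cod D (loE D f) = Cod D f"
    using fac(4) by (auto simp: hom_def)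
qed

lemma Cov_factorizations:
  assumes D: "is_variance D" and e: "e \<in> Cov D"
  shows "upE D e = e" "upM D e = Id D (Cod D e)" "loE D e = e" "loM D e = Id D (Dom D e)"
    "vsrc D e = Dom D e" "vtgt D e = Cod D e"
proof -
  have C: "is_cat D" and a: "e \<in> Arr D" using variance_is_cat[OF D] Cov_Arr[OF D e] .
  have "vfac1 D e = (Id D (Cod D e), e)"
    using e cat_cod_obj[OF C a] cat_id_hom[OF C] cat_comp_id_left[OF C a]
    by (intro vfac1_unique[OF D a]) (auto simp: Id_Con[OF D] hom_def)
  then show up: "upE D e = e" "upM D e = Id D (Cod D e)" by (simp_all add: upE_def upM_def)
  have "vfac2 D e = (e, Id D (Dom D e))"
    using e cat_dom_obj[OF C a] cat_id_hom[OF C] cat_comp_id_right[OF C a]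
    by (intro vfac2_unique[OF D a]) (auto simp: Id_Con[OF D] hom_def)
  then show lo: "loE D e = e" "loM D e = Id D (Dom D e)" by (simp_all add: loE_def loM_def)
  show "vsrc D e = Dom D e" "vtgt D e = Cod D e"
    using up lo cat_id_hom[OF C cat_dom_obj[OF C a]] by (simp_all add: vsrc_def vtgt_def hom_def)
qed

lemma Con_factorizations:
  assumes D: "is_variance D" and m: "m \<in> Con D"
  shows "upE D m = Id D (Dom D m)" "upM D m = m" "loE D m = Id D (Cod D m)" "loM D m = m"
    "vsrc D m = Cod D m" "vtgt D m = Dom D m"
proof -
  have C: "is_cat D" and a: "m \<in> Arr D" using variance_is_cat[OF D] Con_Arr[OF D m] .
  have "vfac1 D m = (m, Id D (Dom D m))"
    using m cat_dom_obj[OF C a] cat_id_hom[OF C] cat_comp_id_right[OF C a]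
    by (intro vfac1_unique[OF D a]) (auto simp: Id_Cov[OF D] hom_def)
  then show up: "upE D m = Id D (Dom D m)" "upM D m = m" by (simp_all add: upE_def upM_def)
  have "vfac2 D m = (Id D (Cod D m), m)"
    using m cat_cod_obj[OF C a] cat_id_hom[OF C] cat_comp_id_left[OF C a]
    by (intro vfac2_unique[OF D a]) (auto simp: Id_Cov[OF D] hom_def)
  then show lo: "loE D m = Id D (Cod D m)" "loM D m = m" by (simp_all add: loE_def loM_def)
  show "vsrc D m = Cod D m" "vtgt D m = Dom D m"
    using up lo cat_id_hom[OF C] cat_dom_obj[OF C a] cat_cod_obj[OF C a]
    by (simp_all add: vsrc_def vtgt_def hom_def)
qed

lemma Id_factorizations:
  assumes D: "is_variance D" and x: "x \<in> Obj D"
  shows "upE D (Id D x) = Id D x" "upM D (Id D x) = Id D x"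
    "loE D (Id D x) = Id D x" "loM D (Id D x) = Id D x"
    "vsrc D (Id D x) = x" "vtgt D (Id D x) = x"
  using Cov_factorizations[OF D Id_Cov[OF D x]] cat_id_hom[OF variance_is_cat[OF D] x]
  by (simp_all add: hom_def)

lemma vfunctor_obj: "is_vfunctor D C Fo Fa \<Longrightarrow> x \<in> Obj D \<Longrightarrow> Fo x \<in> Obj C"
  and vfunctor_hom: "is_vfunctor D C Fo Fa \<Longrightarrow> f \<in> Arr D \<Longrightarrow> Fa f \<in> hom C (Fo (vsrc D f)) (Fo (vtgt D f))"
  and vfunctor_Id: "is_vfunctor D C Fo Fa \<Longrightarrow> x \<in> Obj D \<Longrightarrow> Fa (Id D x) = Id C (Fo x)"
  unfolding is_vfunctor_def by blast+

lemma vfunctor_comp: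
  assumes "is_vfunctor D C Fo Fa" "f \<in> Arr D" "g \<in> Arr D" "Cod D f = Dom D g"
  shows "Fa (Comp D g f) = Comp C (Fa (upE D (Comp D (upE D g) (upM D f))))
                             (Comp C (Fa f) (Fa (loM D (Comp D (loM D g) (loE D f)))))"
    and "Fa (Comp D g f) = Comp C (Fa (upM D (Comp D (upE D g) (upM D f))))
                             (Comp C (Fa g) (Fa (loE D (Comp D (loM D g) (loE D f)))))"
  using assms unfolding is_vfunctor_def by blast+

lemma vfunctor_Cov_hom:
  "is_variance D \<Longrightarrow> is_vfunctor D C Fo Fa \<Longrightarrow> e \<in> Cov D \<Longrightarrow> Fa e \<in> hom C (Fo (Dom D e)) (Fo (Cod D e))"
  using vfunctor_hom[of D C Fo Fa e] Cov_factorizations(5,6)[of D e] Cov_Arr[of D e] by simp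

lemma vfunctor_Con_hom:
  "is_variance D \<Longrightarrow> is_vfunctor D C Fo Fa \<Longrightarrow> m \<in> Con D \<Longrightarrow> Fa m \<in> hom C (Fo (Cod D m)) (Fo (Dom D m))"
  using vfunctor_hom[of D C Fo Fa m] Con_factorizations(5,6)[of D m] Con_Arr[of D m] by simp

lemma vfunctor_comp_Cov:
  assumes D: "is_variance D" and C: "is_cat C" and F: "is_vfunctor D C Fo Fa"
    and f: "f \<in> Cov D" and g: "g \<in> Cov D" and fg: "Cod D f = Dom D g"
  shows "Fa (Comp D g f) = Comp C (Fa g) (Fa f)"
proof -
  have cD: "is_cat D" and fa: "f \<in> Arr D" and ga: "g \<in> Arr D"
    using variance_is_cat[OF D] Cov_Arr[OF D f] Cov_Arr[OF D g] .
  have "Comp D (upE D g) (upM D f) = g" "Comp D (loM D g) (loE D f) = f"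
    using Cov_factorizations[OF D f] Cov_factorizations[OF D g] fg
      cat_comp_id_right[OF cD ga] cat_comp_id_left[OF cD fa] by simp_all
  moreover have "Comp C (Fa f) (Id C (Fo (Dom D f))) = Fa f"
    using cat_comp_id_right[OF C, of "Fa f"] vfunctor_Cov_hom[OF D F f] by (simp add: hom_def)
  ultimately show ?thesis
    using vfunctor_comp(1)[OF F fa ga fg] Cov_factorizations[OF D f] Cov_factorizations[OF D g]
      vfunctor_Id[OF F cat_dom_obj[OF cD fa]] by simp
qed

lemma vfunctor_comp_Con:
  assumes D: "is_variance D" and C: "is_cat C" and F: "is_vfunctor D C Fo Fa"
    and f: "f \<in> Con D" and g: "g \<in> Con D" and fg: "Cod D f = Dom D g"
  shows "Fa (Comp D g f) = Comp C (Fa f) (Fa g)"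
proof -
  have cD: "is_cat D" and fa: "f \<in> Arr D" and ga: "g \<in> Arr D"
    using variance_is_cat[OF D] Con_Arr[OF D f] Con_Arr[OF D g] .
  have "Comp D (upE D g) (upM D f) = f" "Comp D (loM D g) (loE D f) = g"
    using Con_factorizations[OF D f] Con_factorizations[OF D g] fg
      cat_comp_id_left[OF cD fa] cat_comp_id_right[OF cD ga] by simp_all
  moreover have "Comp C (Fa g) (Id C (Fo (Cod D g))) = Fa g"
    using cat_comp_id_right[OF C, of "Fa g"] vfunctor_Con_hom[OF D F g] by (simp add: hom_def)
  ultimately show ?thesis
    using vfunctor_comp(2)[OF F fa ga fg] Con_factorizations[OF D f] Con_factorizations[OF D g]
      vfunctor_Id[OF F cat_cod_obj[OF cD ga]] by simp
qed

section \<open>Products of categories with variances\<close>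

lemma prod_vcat_simps [simp]:
  "Obj (prod_vcat A B) = Obj A \<times> Obj B" "Arr (prod_vcat A B) = Arr A \<times> Arr B"
  "Dom (prod_vcat A B) (f, g) = (Dom A f, Dom B g)" "Cod (prod_vcat A B) (f, g) = (Cod A f, Cod B g)"
  "Id (prod_vcat A B) (x, y) = (Id A x, Id B y)"
  "Comp (prod_vcat A B) (f', g') (f, g) = (Comp A f' f, Comp B g' g)"
  "Cov (prod_vcat A B) = Cov A \<times> Cov B" "Con (prod_vcat A B) = Con A \<times> Con B"
  by (simp_all add: prod_vcat_def)

lemma prod_cat_simps [simp]:
  "Obj (prod_cat A B) = Obj A \<times> Obj B" "Arr (prod_cat A B) = Arr A \<times> Arr B"
  "Dom (prod_cat A B) (f, g) = (Dom A f, Dom B g)" "Cod (prod_cat A B) (f, g) = (Cod A f, Cod B g)"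
  by (simp_all add: prod_cat_def)

lemma prod_vcat_is_cat: "is_cat A \<Longrightarrow> is_cat B \<Longrightarrow> is_cat (prod_vcat A B)"
  unfolding is_cat_def hom_def by (auto simp: prod_vcat_def)

lemma prod_unique_factorization:
  assumes "\<exists>!p. fst p \<in> S \<and> snd p \<in> T \<and> Cod A (snd p) = Dom A (fst p) \<and> Comp A (fst p) (snd p) = f"
    and "\<exists>!p. fst p \<in> S' \<and> snd p \<in> T' \<and> Cod B (snd p) = Dom B (fst p) \<and> Comp B (fst p) (snd p) = g"
  shows "\<exists>!p. fst p \<in> S \<times> S' \<and> snd p \<in> T \<times> T' \<and> Cod (prod_vcat A B) (snd p) = Dom (prod_vcat A B) (fst p)
           \<and> Comp (prod_vcat A B) (fst p) (snd p) = (f, g)"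
proof -
  obtain p where p: "fst p \<in> S" "snd p \<in> T" "Cod A (snd p) = Dom A (fst p)" "Comp A (fst p) (snd p) = f"
    using assms(1) by blast
  obtain q where q: "fst q \<in> S'" "snd q \<in> T'" "Cod B (snd q) = Dom B (fst q)" "Comp B (fst q) (snd q) = g"
    using assms(2) by blast
  show ?thesis
  proof (rule ex1I[of _ "((fst p, fst q), (snd p, snd q))"])
    fix r assume r: "fst r \<in> S \<times> S' \<and> snd r \<in> T \<times> T'
      \<and> Cod (prod_vcat A B) (snd r) = Dom (prod_vcat A B) (fst r) \<and> Comp (prod_vcat A B) (fst r) (snd r) = (f, g)"
    obtain m m' e e' where r_eq: "r = ((m, m'), (e, e'))" by (metis prod.collapse)
    have "m \<in> S" "e \<in> T" "Cod A e = Dom A m" "Comp A m e = f"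
      and "m' \<in> S'" "e' \<in> T'" "Cod B e' = Dom B m'" "Comp B m' e' = g"
      using r unfolding r_eq by simp_all
    then have "(m, e) = p" "(m', e') = q"
      using assms p q by (metis fst_conv snd_conv)+
    then show "r = ((fst p, fst q), (snd p, snd q))" using r_eq by auto
  qed (use p q in auto)
qed

lemma prod_variance:
  assumes A: "is_variance A" and B: "is_variance B"
  shows "is_variance (prod_vcat A B)"
  unfolding is_variance_def
proof (intro conjI ballI)
  show "is_cat (prod_vcat A B)" using prod_vcat_is_cat[OF variance_is_cat[OF A] variance_is_cat[OF B]] .
  show "is_subcat_all_obj (prod_vcat A B) (Cov (prod_vcat A B))"
    "is_subcat_all_obj (prod_vcat A B) (Con (prod_vcat A B))"
    using A B unfolding is_subcat_all_obj_def is_variance_def by auto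
next
  fix h assume "h \<in> Arr (prod_vcat A B)"
  then obtain f g where h: "h = (f, g)" "f \<in> Arr A" "g \<in> Arr B" by auto
  have fac_A:
    "\<exists>!p. fst p \<in> Con A \<and> snd p \<in> Cov A \<and> Cod A (snd p) = Dom A (fst p) \<and> Comp A (fst p) (snd p) = f"
    "\<exists>!p. fst p \<in> Cov A \<and> snd p \<in> Con A \<and> Cod A (snd p) = Dom A (fst p) \<and> Comp A (fst p) (snd p) = f"
    using A h(2) by (simp_all add: is_variance_def)
  have fac_B:
    "\<exists>!p. fst p \<in> Con B \<and> snd p \<in> Cov B \<and> Cod B (snd p) = Dom B (fst p) \<and> Comp B (fst p) (snd p) = g"
    "\<exists>!p. fst p \<in> Cov B \<and> snd p \<in> Con B \<and> Cod B (snd p) = Dom B (fst p) \<and> Comp B (fst p) (snd p) = g"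
    using B h(3) by (simp_all add: is_variance_def)
  show "\<exists>!p. fst p \<in> Con (prod_vcat A B) \<and> snd p \<in> Cov (prod_vcat A B)
       \<and> Cod (prod_vcat A B) (snd p) = Dom (prod_vcat A B) (fst p) \<and> Comp (prod_vcat A B) (fst p) (snd p) = h"
    unfolding h(1) prod_vcat_simps(7,8) by (rule prod_unique_factorization[OF fac_A(1) fac_B(1)])
  show "\<exists>!p. fst p \<in> Cov (prod_vcat A B) \<and> snd p \<in> Con (prod_vcat A B)
       \<and> Cod (prod_vcat A B) (snd p) = Dom (prod_vcat A B) (fst p) \<and> Comp (prod_vcat A B) (fst p) (snd p) = h"
    unfolding h(1) prod_vcat_simps(7,8) by (rule prod_unique_factorization[OF fac_A(2) fac_B(2)])
qed

lemma prod_vcat_factorizations: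
  assumes A: "is_variance A" and B: "is_variance B" and f: "f \<in> Arr A" and g: "g \<in> Arr B"
  shows "upE (prod_vcat A B) (f, g) = (upE A f, upE B g)" "upM (prod_vcat A B) (f, g) = (upM A f, upM B g)"
    "loE (prod_vcat A B) (f, g) = (loE A f, loE B g)" "loM (prod_vcat A B) (f, g) = (loM A f, loM B g)"
    "vsrc (prod_vcat A B) (f, g) = (vsrc A f, vsrc B g)" "vtgt (prod_vcat A B) (f, g) = (vtgt A f, vtgt B g)"
proof -
  have "vfac1 (prod_vcat A B) (f, g) = ((upM A f, upM B g), (upE A f, upE B g))"
    using upM_upE_factorization[OF A f] upM_upE_factorization[OF B g] f g
    by (intro vfac1_unique[OF prod_variance[OF A B]]) auto
  then show up: "upE (prod_vcat A B) (f, g) = (upE A f, upE B g)"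
    "upM (prod_vcat A B) (f, g) = (upM A f, upM B g)"
    by (simp_all add: upE_def upM_def)
  have "vfac2 (prod_vcat A B) (f, g) = ((loE A f, loE B g), (loM A f, loM B g))"
    using loE_loM_factorization[OF A f] loE_loM_factorization[OF B g] f g
    by (intro vfac2_unique[OF prod_variance[OF A B]]) auto
  then show lo: "loE (prod_vcat A B) (f, g) = (loE A f, loE B g)"
    "loM (prod_vcat A B) (f, g) = (loM A f, loM B g)"
    by (simp_all add: loE_def loM_def)
  show "vsrc (prod_vcat A B) (f, g) = (vsrc A f, vsrc B g)"
    "vtgt (prod_vcat A B) (f, g) = (vtgt A f, vtgt B g)"
    using up lo by (simp_all add: vsrc_def vtgt_def)
qed

lemma vfunctor_slice:
  assumes A: "is_variance A" and B: "is_variance B" and F: "is_vfunctor (prod_vcat A B) C Fo Fa"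
    and b: "b \<in> Obj B"
  shows "is_vfunctor A C (\<lambda>x. Fo (x, b)) (\<lambda>f. Fa (f, Id B b))"
proof -
  have cA: "is_cat A" and cB: "is_cat B" by (fact variance_is_cat[OF A], fact variance_is_cat[OF B])
  note Id_b = Id_factorizations[OF B b] cat_id_hom[OF cB b]
  have Id_b_comp: "Comp B (Id B b) (Id B b) = Id B b"
    using Id_b cat_comp_id_left[OF cB, of "Id B b"] by (auto simp: hom_def)
  show ?thesis
    unfolding is_vfunctor_def
  proof (intro conjI ballI impI)
    fix x assume "x \<in> Obj A"
    then show "Fo (x, b) \<in> Obj C" "Fa (Id A x, Id B b) = Id C (Fo (x, b))"
      using vfunctor_obj[OF F, of "(x, b)"] vfunctor_Id[OF F, of "(x, b)"] b by simp_all
  next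
    fix f assume "f \<in> Arr A"
    then show "Fa (f, Id B b) \<in> hom C (Fo (vsrc A f, b)) (Fo (vtgt A f, b))"
      using vfunctor_hom[OF F, of "(f, Id B b)"] prod_vcat_factorizations(5,6)[OF A B] Id_b
      by (auto simp: hom_def)
  next
    fix f g assume f: "f \<in> Arr A" and g: "g \<in> Arr A" and fg: "Cod A f = Dom A g"
    have "Comp A (upE A g) (upM A f) \<in> Arr A" "Comp A (loM A g) (loE A f) \<in> Arr A"
      using upE_upM_Arr[OF A f] upE_upM_Arr[OF A g] loE_loM_Arr[OF A f] loE_loM_Arr[OF A g] fg
      by (auto intro: cat_comp_Arr[OF cA])
    then show "Fa (Comp A g f, Id B b) =
        Comp C (Fa (upE A (Comp A (upE A g) (upM A f)), Id B b))
          (Comp C (Fa (f, Id B b)) (Fa (loM A (Comp A (loM A g) (loE A f)), Id B b)))"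
      and "Fa (Comp A g f, Id B b) =
        Comp C (Fa (upM A (Comp A (upE A g) (upM A f)), Id B b))
          (Comp C (Fa (g, Id B b)) (Fa (loE A (Comp A (loM A g) (loE A f)), Id B b)))"
      using vfunctor_comp[OF F, of "(f, Id B b)" "(g, Id B b)"] f g fg Id_b Id_b_comp
        prod_vcat_factorizations[OF A B] by (auto simp: hom_def)
  qed
qed

lemma vfunctor_prod_Cov_split:
  assumes A: "is_variance A" and B: "is_variance B" and C: "is_cat C"
    and F: "is_vfunctor (prod_vcat A B) C Fo Fa" and e: "e \<in> Cov A" and e': "e' \<in> Cov B"
  shows "Fa (e, e') = Comp C (Fa (e, Id B (Cod B e'))) (Fa (Id A (Dom A e), e'))"
proof -
  have cA: "is_cat A" and cB: "is_cat B" by (fact variance_is_cat[OF A], fact variance_is_cat[OF B])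
  have ea: "e \<in> Arr A" and ea': "e' \<in> Arr B" by (fact Cov_Arr[OF A e], fact Cov_Arr[OF B e'])
  have "Comp (prod_vcat A B) (e, Id B (Cod B e')) (Id A (Dom A e), e') = (e, e')"
    using cat_comp_id_right[OF cA ea] cat_comp_id_left[OF cB ea'] by simp
  moreover have "Fa (Comp (prod_vcat A B) (e, Id B (Cod B e')) (Id A (Dom A e), e'))
      = Comp C (Fa (e, Id B (Cod B e'))) (Fa (Id A (Dom A e), e'))"
    using e e' Id_Cov[OF A cat_dom_obj[OF cA ea]] Id_Cov[OF B cat_cod_obj[OF cB ea']]
      cat_id_hom[OF cA cat_dom_obj[OF cA ea]] cat_id_hom[OF cB cat_cod_obj[OF cB ea']]
    by (intro vfunctor_comp_Cov[OF prod_variance[OF A B] C F]) (auto simp: hom_def)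
  ultimately show ?thesis by simp
qed

lemma vfunctor_prod_Con_split:
  assumes A: "is_variance A" and B: "is_variance B" and C: "is_cat C"
    and F: "is_vfunctor (prod_vcat A B) C Fo Fa" and m: "m \<in> Con A" and m': "m' \<in> Con B"
  shows "Fa (m, m') = Comp C (Fa (m, Id B (Dom B m'))) (Fa (Id A (Cod A m), m'))"
proof -
  have cA: "is_cat A" and cB: "is_cat B" by (fact variance_is_cat[OF A], fact variance_is_cat[OF B])
  have ma: "m \<in> Arr A" and ma': "m' \<in> Arr B" by (fact Con_Arr[OF A m], fact Con_Arr[OF B m'])
  have "Comp (prod_vcat A B) (Id A (Cod A m), m') (m, Id B (Dom B m')) = (m, m')"
    using cat_comp_id_left[OF cA ma] cat_comp_id_right[OF cB ma'] by simp
  moreover have "Fa (Comp (prod_vcat A B) (Id A (Cod A m), m') (m, Id B (Dom B m')))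
      = Comp C (Fa (m, Id B (Dom B m'))) (Fa (Id A (Cod A m), m'))"
    using m m' Id_Con[OF A cat_cod_obj[OF cA ma]] Id_Con[OF B cat_dom_obj[OF cB ma']]
      cat_id_hom[OF cA cat_cod_obj[OF cA ma]] cat_id_hom[OF cB cat_dom_obj[OF cB ma']]
    by (intro vfunctor_comp_Con[OF prod_variance[OF A B] C F]) (auto simp: hom_def)
  ultimately show ?thesis by simp
qed

section \<open>Wedges and ends\<close>

lemma wedge_precomp:
  assumes A: "is_variance A" and C: "is_cat C" and R: "is_cat R" and L: "is_functor R A Lo La"
    and G: "is_vfunctor A C Go Ga" and w: "is_wedge A C Go Ga R Lo La d \<eta>" and k: "k \<in> hom C c d"
  shows "is_wedge A C Go Ga R Lo La c (\<lambda>x. Comp C (\<eta> x) k)"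
  unfolding is_wedge_def
proof (intro conjI ballI)
  show "c \<in> Obj C" using k cat_dom_obj[OF C] by (auto simp: hom_def)
next
  fix x assume "x \<in> Obj R"
  then show "Comp C (\<eta> x) k \<in> hom C c (Go (Lo x))"
    using w k cat_comp_hom[OF C] by (auto simp: is_wedge_def)
next
  fix f assume f: "f \<in> Arr R"
  have Lf: "La f \<in> Arr A" "Dom A (La f) = Lo (Dom R f)" "Cod A (La f) = Lo (Cod R f)"
    using functor_hom[OF L f] by (simp_all add: hom_def)
  note fac = upM_upE_factorization[OF A Lf(1)] upE_upM_Arr[OF A Lf(1)]
  have "Ga (upE A (La f)) \<in> hom C (Go (Lo (Dom R f))) (Go (Cod A (upE A (La f))))"
    "Ga (upM A (La f)) \<in> hom C (Go (Lo (Cod R f))) (Go (Cod A (upE A (La f))))"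
    using vfunctor_Cov_hom[OF A G fac(2)] vfunctor_Con_hom[OF A G fac(1)] fac(3,7,8) Lf by simp_all
  moreover have "\<eta> (Dom R f) \<in> hom C d (Go (Lo (Dom R f)))" "\<eta> (Cod R f) \<in> hom C d (Go (Lo (Cod R f)))"
    using w cat_dom_obj[OF R f] cat_cod_obj[OF R f] by (simp_all add: is_wedge_def)
  moreover have "Comp C (Ga (upE A (La f))) (\<eta> (Dom R f)) = Comp C (Ga (upM A (La f))) (\<eta> (Cod R f))"
    using w f by (simp add: is_wedge_def)
  ultimately show "Comp C (Ga (upE A (La f))) (Comp C (\<eta> (Dom R f)) k)
      = Comp C (Ga (upM A (La f))) (Comp C (\<eta> (Cod R f)) k)"
    using cat_comp_assoc[OF C k] by metis
qed

lemma end_jointly_monic: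
  assumes A: "is_variance A" and C: "is_cat C" and R: "is_cat R" and L: "is_functor R A Lo La"
    and G: "is_vfunctor A C Go Ga" and e: "is_end A C Go Ga R Lo La d \<eta>"
    and k1: "k1 \<in> hom C c d" and k2: "k2 \<in> hom C c d"
    and eq: "\<And>x. x \<in> Obj R \<Longrightarrow> Comp C (\<eta> x) k1 = Comp C (\<eta> x) k2"
  shows "k1 = k2"
proof -
  have "is_wedge A C Go Ga R Lo La c (\<lambda>x. Comp C (\<eta> x) k1)"
    using wedge_precomp[OF A C R L G _ k1] e by (simp add: is_end_def)
  then have "\<exists>!h. wedge_morph C R c (\<lambda>x. Comp C (\<eta> x) k1) d \<eta> h"
    using e by (simp add: is_end_def)
  moreover have "wedge_morph C R c (\<lambda>x. Comp C (\<eta> x) k1) d \<eta> k1"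
    "wedge_morph C R c (\<lambda>x. Comp C (\<eta> x) k1) d \<eta> k2"
    using k1 k2 eq by (simp_all add: wedge_morph_def)
  ultimately show ?thesis by blast
qed

lemma wedge_morph_cong:
  "(\<And>x. x \<in> Obj R \<Longrightarrow> \<eta> x = \<eta>' x) \<Longrightarrow> (\<And>x. x \<in> Obj R \<Longrightarrow> \<theta> x = \<theta>' x) \<Longrightarrow>
   wedge_morph C R c \<eta> d \<theta> h = wedge_morph C R c \<eta>' d \<theta>' h"
  by (simp add: wedge_morph_def)

lemma wedge_cat_simps:
  "Obj (wedge_cat A C Go Ga R Lo La) = {(c, \<eta>). is_wedge A C Go Ga R Lo La c \<eta> \<and> \<eta> \<in> extensional (Obj R)}"
  "Arr (wedge_cat A C Go Ga R Lo La) = {(v, w, h). v \<in> Obj (wedge_cat A C Go Ga R Lo La)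
      \<and> w \<in> Obj (wedge_cat A C Go Ga R Lo La) \<and> wedge_morph C R (fst v) (snd v) (fst w) (snd w) h}"
  "Dom (wedge_cat A C Go Ga R Lo La) = (\<lambda>(v, w, h). v)"
  "Cod (wedge_cat A C Go Ga R Lo La) = (\<lambda>(v, w, h). w)"
  "Id (wedge_cat A C Go Ga R Lo La) = (\<lambda>v. (v, v, Id C (fst v)))"
  "Comp (wedge_cat A C Go Ga R Lo La) = (\<lambda>(v', w', k) (v, w, h). (v, w', Comp C k h))"
  by (simp_all add: wedge_cat_def Let_def)

lemma wedge_cat_iso:
  fixes A :: "('o,'a,'z) vcat_scheme" and A' :: "('o','a','z') vcat_scheme"
    and C :: "('oc,'ac,'zc) cat_scheme"
    and R :: "('r,'b,'zr) cat_scheme" and R' :: "('r','b','zr') cat_scheme"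
    and Go Ga Lo La Go' Ga' Lo' La'
  defines "W \<equiv> wedge_cat A C Go Ga R Lo La" and "W' \<equiv> wedge_cat A' C Go' Ga' R' Lo' La'"
  assumes bij: "bij_betw T (Obj W) (Obj W')"
    and fst_T: "\<And>v. v \<in> Obj W \<Longrightarrow> fst (T v) = fst v"
    and morph_T: "\<And>v w h. v \<in> Obj W \<Longrightarrow> w \<in> Obj W \<Longrightarrow>
      wedge_morph C R (fst v) (snd v) (fst w) (snd w) h \<longleftrightarrow>
      wedge_morph C R' (fst (T v)) (snd (T v)) (fst (T w)) (snd (T w)) h"
  shows "is_cat_iso W W' T (\<lambda>(v, w, h). (T v, T w, h))"
proof -
  note W_simps = wedge_cat_simps(2-6)[of A C Go Ga R Lo La, folded W_def]
  note W'_simps = wedge_cat_simps(2-6)[of A' C Go' Ga' R' Lo' La', folded W'_def]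
  have T_Obj: "v \<in> Obj W \<Longrightarrow> T v \<in> Obj W'" for v
    using bij by (rule bij_betw_apply)
  have T_Arr: "(v, w, h) \<in> Arr W \<longleftrightarrow> (T v, T w, h) \<in> Arr W'" if "v \<in> Obj W" "w \<in> Obj W" for v w h
    using that T_Obj morph_T unfolding W_simps W'_simps by auto
  have "is_functor W W' T (\<lambda>(v, w, h). (T v, T w, h))"
    unfolding is_functor_def
  proof (intro conjI ballI impI)
    fix f assume f: "f \<in> Arr W"
    then obtain v w h where "f = (v, w, h)" "v \<in> Obj W" "w \<in> Obj W"
      unfolding W_simps by auto
    with f show "(case f of (v, w, h) \<Rightarrow> (T v, T w, h)) \<in> hom W' (T (Dom W f)) (T (Cod W f))"
      using T_Arr by (simp add: hom_def W_simps W'_simps)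
  next
    fix v assume "v \<in> Obj W"
    then show "(case Id W v of (v, w, h) \<Rightarrow> (T v, T w, h)) = Id W' (T v)"
      using fst_T by (simp add: W_simps W'_simps)
  qed (auto simp: T_Obj W_simps W'_simps)
  moreover have "bij_betw (\<lambda>(v, w, h). (T v, T w, h)) (Arr W) (Arr W')"
  proof (rule bij_betw_imageI)
    show "inj_on (\<lambda>(v, w, h). (T v, T w, h)) (Arr W)"
      using bij_betw_imp_inj_on[OF bij] unfolding W_simps
      by (auto intro!: inj_onI dest: inj_onD)
    show "(\<lambda>(v, w, h). (T v, T w, h)) ` Arr W = Arr W'"
    proof
      show "(\<lambda>(v, w, h). (T v, T w, h)) ` Arr W \<subseteq> Arr W'"
        using T_Arr unfolding W_simps by auto
    next
      show "Arr W' \<subseteq> (\<lambda>(v, w, h). (T v, T w, h)) ` Arr W"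
      proof clarify
        fix v' w' h assume a: "(v', w', h) \<in> Arr W'"
        then obtain v w where vw: "v \<in> Obj W" "w \<in> Obj W" "v' = T v" "w' = T w"
          using bij unfolding W'_simps bij_betw_def by blast
        with a T_Arr have "(v, w, h) \<in> Arr W" by simp
        with vw show "(v', w', h) \<in> (\<lambda>(v, w, h). (T v, T w, h)) ` Arr W"
          by (auto intro: rev_image_eqI)
      qed
    qed
  qed
  ultimately show ?thesis
    using bij by (simp add: is_cat_iso_def)
qed

section \<open>Ends of ends\<close>

locale iterated_end =
  fixes A :: "('oa,'aa,'za) vcat_scheme" and B :: "('ob,'ab,'zb) vcat_scheme"
    and C :: "('oc,'ac,'zc) cat_scheme"
    and R1 :: "('r1,'b1,'z1) cat_scheme" and R2 :: "('r2,'b2,'z2) cat_scheme"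
    and L1o :: "'r1 \<Rightarrow> 'oa" and L1a :: "'b1 \<Rightarrow> 'aa"
    and L2o :: "'r2 \<Rightarrow> 'ob" and L2a :: "'b2 \<Rightarrow> 'ab"
    and Fo :: "'oa \<times> 'ob \<Rightarrow> 'oc" and Fa :: "'aa \<times> 'ab \<Rightarrow> 'ac"
    and Eo :: "'ob \<Rightarrow> 'oc" and \<omega> :: "'ob \<Rightarrow> 'r1 \<Rightarrow> 'ac"
    and Ea :: "'ab \<Rightarrow> 'ac"
  assumes A: "is_variance A" and B: "is_variance B" and C: "is_cat C"
    and R1: "is_cat R1" and R2: "is_cat R2"
    and L1: "is_functor R1 A L1o L1a" and L2: "is_functor R2 B L2o L2a"
    and F: "is_vfunctor (prod_vcat A B) C Fo Fa"
    and ends: "\<forall>b\<in>Obj B. is_end A C (\<lambda>x. Fo (x, b)) (\<lambda>f. Fa (f, Id B b)) R1 L1o L1a (Eo b) (\<omega> b)"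
    and E: "is_vfunctor B C Eo Ea"
    and E_nat: "\<forall>x\<in>Obj R1. \<forall>g\<in>Arr B.
        Comp C (Fa (Id A (L1o x), g)) (\<omega> (vsrc B g) x) = Comp C (\<omega> (vtgt B g) x) (Ea g)"
begin

abbreviation "L12o \<equiv> \<lambda>(x, y). (L1o x, L2o y)"
abbreviation "L12a \<equiv> \<lambda>(f, g). (L1a f, L2a g)"
abbreviation "is_L2_wedge \<equiv> is_wedge B C Eo Ea R2 L2o L2a"
abbreviation "is_L_wedge \<equiv> is_wedge (prod_vcat A B) C Fo Fa (prod_cat R1 R2) L12o L12a"
abbreviation "tilde \<equiv> tilde_fam C R1 R2 L2o \<omega>"

lemma cat_A: "is_cat A" and cat_B: "is_cat B"
  by (fact variance_is_cat[OF A], fact variance_is_cat[OF B])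

lemma omega_end: "b \<in> Obj B \<Longrightarrow> is_end A C (\<lambda>x. Fo (x, b)) (\<lambda>f. Fa (f, Id B b)) R1 L1o L1a (Eo b) (\<omega> b)"
  using ends by blast

lemma omega_wedge: "b \<in> Obj B \<Longrightarrow> is_wedge A C (\<lambda>x. Fo (x, b)) (\<lambda>f. Fa (f, Id B b)) R1 L1o L1a (Eo b) (\<omega> b)"
  using omega_end by (simp add: is_end_def)

lemma omega_hom: "b \<in> Obj B \<Longrightarrow> x \<in> Obj R1 \<Longrightarrow> \<omega> b x \<in> hom C (Eo b) (Fo (L1o x, b))"
  using omega_wedge by (simp add: is_wedge_def)

lemma omega_jointly_monic:
  assumes "b \<in> Obj B" "k1 \<in> hom C c (Eo b)" "k2 \<in> hom C c (Eo b)"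
    and "\<And>x. x \<in> Obj R1 \<Longrightarrow> Comp C (\<omega> b x) k1 = Comp C (\<omega> b x) k2"
  shows "k1 = k2"
  using end_jointly_monic[OF A C R1 L1 vfunctor_slice[OF A B F] omega_end] assms by blast

lemma Fa_Cov_hom: "e \<in> Cov A \<Longrightarrow> e' \<in> Cov B \<Longrightarrow>
    Fa (e, e') \<in> hom C (Fo (Dom A e, Dom B e')) (Fo (Cod A e, Cod B e'))"
  using vfunctor_Cov_hom[OF prod_variance[OF A B] F, of "(e, e')"] by simp

lemma Fa_Con_hom: "m \<in> Con A \<Longrightarrow> m' \<in> Con B \<Longrightarrow>
    Fa (m, m') \<in> hom C (Fo (Cod A m, Cod B m')) (Fo (Dom A m, Dom B m'))"
  using vfunctor_Con_hom[OF prod_variance[OF A B] F, of "(m, m')"] by simp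

lemma Id_L1o:
  assumes "x \<in> Obj R1"
  shows "Id A (L1o x) \<in> Cov A" "Id A (L1o x) \<in> Con A"
    "Dom A (Id A (L1o x)) = L1o x" "Cod A (Id A (L1o x)) = L1o x"
  using functor_obj[OF L1 assms] Id_Cov[OF A] Id_Con[OF A] cat_id_hom[OF cat_A]
  by (simp_all add: hom_def)

lemma omega_natural_Cov:
  assumes x: "x \<in> Obj R1" and e: "e \<in> Cov B" and h: "h \<in> hom C c (Eo (Dom B e))"
  shows "Comp C (\<omega> (Cod B e) x) (Comp C (Ea e) h)
       = Comp C (Fa (Id A (L1o x), e)) (Comp C (\<omega> (Dom B e) x) h)"
proof -
  have ea: "e \<in> Arr B" by (fact Cov_Arr[OF B e])
  have Ea_e: "Ea e \<in> hom C (Eo (Dom B e)) (Eo (Cod B e))"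
    by (fact vfunctor_Cov_hom[OF B E e])
  have \<omega>_dom: "\<omega> (Dom B e) x \<in> hom C (Eo (Dom B e)) (Fo (L1o x, Dom B e))"
    and \<omega>_cod: "\<omega> (Cod B e) x \<in> hom C (Eo (Cod B e)) (Fo (L1o x, Cod B e))"
    using omega_hom x cat_dom_obj[OF cat_B ea] cat_cod_obj[OF cat_B ea] by simp_all
  have Fa_e: "Fa (Id A (L1o x), e) \<in> hom C (Fo (L1o x, Dom B e)) (Fo (L1o x, Cod B e))"
    using Fa_Cov_hom[OF Id_L1o(1)[OF x] e] Id_L1o[OF x] by simp
  have "Comp C (\<omega> (Cod B e) x) (Comp C (Ea e) h) = Comp C (Comp C (\<omega> (Cod B e) x) (Ea e)) h"
    by (fact cat_comp_assoc[OF C h Ea_e \<omega>_cod])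
  also have "\<dots> = Comp C (Comp C (Fa (Id A (L1o x), e)) (\<omega> (Dom B e) x)) h"
    using E_nat[rule_format, OF x ea] Cov_factorizations(5,6)[OF B e] by simp
  also have "\<dots> = Comp C (Fa (Id A (L1o x), e)) (Comp C (\<omega> (Dom B e) x) h)"
    by (fact cat_comp_assoc[OF C h \<omega>_dom Fa_e, symmetric])
  finally show ?thesis .
qed

lemma omega_natural_Con:
  assumes x: "x \<in> Obj R1" and m: "m \<in> Con B" and h: "h \<in> hom C c (Eo (Cod B m))"
  shows "Comp C (\<omega> (Dom B m) x) (Comp C (Ea m) h)
       = Comp C (Fa (Id A (L1o x), m)) (Comp C (\<omega> (Cod B m) x) h)"
proof -
  have ma: "m \<in> Arr B" by (fact Con_Arr[OF B m])
  have Ea_m: "Ea m \<in> hom C (Eo (Cod B m)) (Eo (Dom B m))"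
    by (fact vfunctor_Con_hom[OF B E m])
  have \<omega>_dom: "\<omega> (Dom B m) x \<in> hom C (Eo (Dom B m)) (Fo (L1o x, Dom B m))"
    and \<omega>_cod: "\<omega> (Cod B m) x \<in> hom C (Eo (Cod B m)) (Fo (L1o x, Cod B m))"
    using omega_hom x cat_dom_obj[OF cat_B ma] cat_cod_obj[OF cat_B ma] by simp_all
  have Fa_m: "Fa (Id A (L1o x), m) \<in> hom C (Fo (L1o x, Cod B m)) (Fo (L1o x, Dom B m))"
    using Fa_Con_hom[OF Id_L1o(2)[OF x] m] Id_L1o[OF x] by simp
  have "Comp C (\<omega> (Dom B m) x) (Comp C (Ea m) h) = Comp C (Comp C (\<omega> (Dom B m) x) (Ea m)) h"
    by (fact cat_comp_assoc[OF C h Ea_m \<omega>_dom])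
  also have "\<dots> = Comp C (Comp C (Fa (Id A (L1o x), m)) (\<omega> (Cod B m) x)) h"
    using E_nat[rule_format, OF x ma] Con_factorizations(5,6)[OF B m] by simp
  also have "\<dots> = Comp C (Fa (Id A (L1o x), m)) (Comp C (\<omega> (Cod B m) x) h)"
    by (fact cat_comp_assoc[OF C h \<omega>_cod Fa_m, symmetric])
  finally show ?thesis .
qed


lemma Fa_comp_omega_Cov:
  assumes x: "x \<in> Obj R1" and e: "e \<in> Cov A" "Dom A e = L1o x" and e': "e' \<in> Cov B"
    and h: "h \<in> hom C c (Eo (Dom B e'))"
  shows "Comp C (Fa (e, e')) (Comp C (\<omega> (Dom B e') x) h)
       = Comp C (Comp C (Fa (e, Id B (Cod B e'))) (\<omega> (Cod B e') x)) (Comp C (Ea e') h)"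
proof -
  have ea': "e' \<in> Arr B" by (fact Cov_Arr[OF B e'])
  have obj: "Dom B e' \<in> Obj B" "Cod B e' \<in> Obj B"
    using cat_dom_obj[OF cat_B ea'] cat_cod_obj[OF cat_B ea'] .
  have Fa_e: "Fa (e, Id B (Cod B e')) \<in> hom C (Fo (L1o x, Cod B e')) (Fo (Cod A e, Cod B e'))"
    using Fa_Cov_hom[OF e(1) Id_Cov[OF B obj(2)]] cat_id_hom[OF cat_B obj(2)] e(2) by (simp add: hom_def)
  have Fa_e': "Fa (Id A (L1o x), e') \<in> hom C (Fo (L1o x, Dom B e')) (Fo (L1o x, Cod B e'))"
    using Fa_Cov_hom[OF Id_L1o(1)[OF x] e'] Id_L1o[OF x] by simp
  have \<omega>h: "Comp C (\<omega> (Dom B e') x) h \<in> hom C c (Fo (L1o x, Dom B e'))"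
    using cat_comp_hom[OF C h omega_hom[OF obj(1) x]] .
  have Eah: "Comp C (Ea e') h \<in> hom C c (Eo (Cod B e'))"
    using cat_comp_hom[OF C h vfunctor_Cov_hom[OF B E e']] .
  have "Comp C (Fa (e, e')) (Comp C (\<omega> (Dom B e') x) h)
      = Comp C (Comp C (Fa (e, Id B (Cod B e'))) (Fa (Id A (L1o x), e'))) (Comp C (\<omega> (Dom B e') x) h)"
    using vfunctor_prod_Cov_split[OF A B C F e(1) e'] e(2) by simp
  also have "\<dots> = Comp C (Fa (e, Id B (Cod B e'))) (Comp C (Fa (Id A (L1o x), e')) (Comp C (\<omega> (Dom B e') x) h))"
    by (fact cat_comp_assoc[OF C \<omega>h Fa_e' Fa_e, symmetric])
  also have "\<dots> = Comp C (Fa (e, Id B (Cod B e'))) (Comp C (\<omega> (Cod B e') x) (Comp C (Ea e') h))"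
    using omega_natural_Cov[OF x e' h] by simp
  also have "\<dots> = Comp C (Comp C (Fa (e, Id B (Cod B e'))) (\<omega> (Cod B e') x)) (Comp C (Ea e') h)"
    by (fact cat_comp_assoc[OF C Eah omega_hom[OF obj(2) x] Fa_e])
  finally show ?thesis .
qed

lemma Fa_comp_omega_Con:
  assumes x: "x \<in> Obj R1" and m: "m \<in> Con A" "Cod A m = L1o x" and m': "m' \<in> Con B"
    and h: "h \<in> hom C c (Eo (Cod B m'))"
  shows "Comp C (Fa (m, m')) (Comp C (\<omega> (Cod B m') x) h)
       = Comp C (Comp C (Fa (m, Id B (Dom B m'))) (\<omega> (Dom B m') x)) (Comp C (Ea m') h)"
proof -
  have ma': "m' \<in> Arr B" by (fact Con_Arr[OF B m'])
  have obj: "Dom B m' \<in> Obj B" "Cod B m' \<in> Obj B"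
    using cat_dom_obj[OF cat_B ma'] cat_cod_obj[OF cat_B ma'] .
  have Fa_m: "Fa (m, Id B (Dom B m')) \<in> hom C (Fo (L1o x, Dom B m')) (Fo (Dom A m, Dom B m'))"
    using Fa_Con_hom[OF m(1) Id_Con[OF B obj(1)]] cat_id_hom[OF cat_B obj(1)] m(2) by (simp add: hom_def)
  have Fa_m': "Fa (Id A (L1o x), m') \<in> hom C (Fo (L1o x, Cod B m')) (Fo (L1o x, Dom B m'))"
    using Fa_Con_hom[OF Id_L1o(2)[OF x] m'] Id_L1o[OF x] by simp
  have \<omega>h: "Comp C (\<omega> (Cod B m') x) h \<in> hom C c (Fo (L1o x, Cod B m'))"
    using cat_comp_hom[OF C h omega_hom[OF obj(2) x]] .
  have Eah: "Comp C (Ea m') h \<in> hom C c (Eo (Dom B m'))"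
    using cat_comp_hom[OF C h vfunctor_Con_hom[OF B E m']] .
  have "Comp C (Fa (m, m')) (Comp C (\<omega> (Cod B m') x) h)
      = Comp C (Comp C (Fa (m, Id B (Dom B m'))) (Fa (Id A (L1o x), m'))) (Comp C (\<omega> (Cod B m') x) h)"
    using vfunctor_prod_Con_split[OF A B C F m(1) m'] m(2) by simp
  also have "\<dots> = Comp C (Fa (m, Id B (Dom B m'))) (Comp C (Fa (Id A (L1o x), m')) (Comp C (\<omega> (Cod B m') x) h))"
    by (fact cat_comp_assoc[OF C \<omega>h Fa_m' Fa_m, symmetric])
  also have "\<dots> = Comp C (Fa (m, Id B (Dom B m'))) (Comp C (\<omega> (Dom B m') x) (Comp C (Ea m') h))"
    using omega_natural_Con[OF x m' h] by simp
  also have "\<dots> = Comp C (Comp C (Fa (m, Id B (Dom B m'))) (\<omega> (Dom B m') x)) (Comp C (Ea m') h)"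
    by (fact cat_comp_assoc[OF C Eah omega_hom[OF obj(1) x] Fa_m])
  finally show ?thesis .
qed

lemma is_L_wedge_iff:
  "is_L_wedge c \<eta> \<longleftrightarrow> c \<in> Obj C \<and>
     (\<forall>x\<in>Obj R1. \<forall>y\<in>Obj R2. \<eta> (x, y) \<in> hom C c (Fo (L1o x, L2o y))) \<and>
     (\<forall>f\<in>Arr R1. \<forall>g\<in>Arr R2.
        Comp C (Fa (upE A (L1a f), upE B (L2a g))) (\<eta> (Dom R1 f, Dom R2 g))
      = Comp C (Fa (upM A (L1a f), upM B (L2a g))) (\<eta> (Cod R1 f, Cod R2 g)))"
proof -
  have "upE (prod_vcat A B) (L1a f, L2a g) = (upE A (L1a f), upE B (L2a g))"
    "upM (prod_vcat A B) (L1a f, L2a g) = (upM A (L1a f), upM B (L2a g))"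
    if "f \<in> Arr R1" "g \<in> Arr R2" for f g
    using prod_vcat_factorizations[OF A B] functor_hom[OF L1 that(1)] functor_hom[OF L2 that(2)]
    by (simp_all add: hom_def)
  then show ?thesis
    unfolding is_wedge_def by auto
qed

lemma tilde_wedge:
  assumes \<theta>: "is_L2_wedge c \<theta>"
  shows "is_L_wedge c (tilde \<theta>)"
  unfolding is_L_wedge_iff
proof (intro conjI ballI)
  show "c \<in> Obj C" using \<theta> by (simp add: is_wedge_def)
next
  fix x y assume x: "x \<in> Obj R1" and y: "y \<in> Obj R2"
  then show "tilde \<theta> (x, y) \<in> hom C c (Fo (L1o x, L2o y))"
    using \<theta> cat_comp_hom[OF C _ omega_hom[OF functor_obj[OF L2 y] x]]
    by (simp add: tilde_fam_def is_wedge_def)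
next
  fix f g assume f: "f \<in> Arr R1" and g: "g \<in> Arr R2"
  define a b where "a = L1a f" and "b = L2a g"
  have a: "a \<in> Arr A" "Dom A a = L1o (Dom R1 f)" "Cod A a = L1o (Cod R1 f)"
    using functor_hom[OF L1 f] unfolding a_def by (simp_all add: hom_def)
  have b: "b \<in> Arr B" "Dom B b = L2o (Dom R2 g)" "Cod B b = L2o (Cod R2 g)"
    using functor_hom[OF L2 g] unfolding b_def by (simp_all add: hom_def)
  note fac_a = upM_upE_factorization[OF A a(1)] upE_upM_Arr[OF A a(1)]
  note fac_b = upM_upE_factorization[OF B b(1)] upE_upM_Arr[OF B b(1)]
  have x: "Dom R1 f \<in> Obj R1" "Cod R1 f \<in> Obj R1"
    using cat_dom_obj[OF R1 f] cat_cod_obj[OF R1 f] .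
  have y: "Dom R2 g \<in> Obj R2" "Cod R2 g \<in> Obj R2"
    using cat_dom_obj[OF R2 g] cat_cod_obj[OF R2 g] .
  have \<theta>_hom: "\<theta> (Dom R2 g) \<in> hom C c (Eo (Dom B (upE B b)))"
    "\<theta> (Cod R2 g) \<in> hom C c (Eo (Cod B (upM B b)))"
    using \<theta> y fac_b b by (simp_all add: is_wedge_def)
  have bt: "Cod B (upE B b) \<in> Obj B"
    using cat_cod_obj[OF cat_B fac_b(5)] .
  have \<theta>_eq: "Comp C (Ea (upE B b)) (\<theta> (Dom R2 g)) = Comp C (Ea (upM B b)) (\<theta> (Cod R2 g))"
    using \<theta> g unfolding b_def is_wedge_def by blast
  have \<omega>_eq: "Comp C (Fa (upE A a, Id B (Cod B (upE B b)))) (\<omega> (Cod B (upE B b)) (Dom R1 f))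
      = Comp C (Fa (upM A a, Id B (Cod B (upE B b)))) (\<omega> (Cod B (upE B b)) (Cod R1 f))"
    using omega_wedge[OF bt] f unfolding a_def is_wedge_def by blast
  show "Comp C (Fa (upE A (L1a f), upE B (L2a g))) (tilde \<theta> (Dom R1 f, Dom R2 g))
      = Comp C (Fa (upM A (L1a f), upM B (L2a g))) (tilde \<theta> (Cod R1 f, Cod R2 g))"
    using Fa_comp_omega_Cov[OF x(1) fac_a(2) _ fac_b(2) \<theta>_hom(1)]
      Fa_comp_omega_Con[OF x(2) fac_a(1) _ fac_b(1) \<theta>_hom(2)] fac_a fac_b a b \<theta>_eq \<omega>_eq x y
    unfolding a_def b_def by (simp add: tilde_fam_def)
qed

lemma L_wedge_eq_Id_fst:
  assumes \<eta>: "is_L_wedge c \<eta>" and x: "x \<in> Obj R1" and g: "g \<in> Arr R2"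
  shows "Comp C (Fa (Id A (L1o x), upE B (L2a g))) (\<eta> (x, Dom R2 g))
       = Comp C (Fa (Id A (L1o x), upM B (L2a g))) (\<eta> (x, Cod R2 g))"
proof -
  have Id_x: "Id R1 x \<in> Arr R1" "Dom R1 (Id R1 x) = x" "Cod R1 (Id R1 x) = x"
    using cat_id_hom[OF R1 x] by (simp_all add: hom_def)
  have "upE A (L1a (Id R1 x)) = Id A (L1o x)" "upM A (L1a (Id R1 x)) = Id A (L1o x)"
    using functor_Id[OF L1 x] Id_factorizations[OF A functor_obj[OF L1 x]] by simp_all
  then show ?thesis
    using \<eta>[unfolded is_L_wedge_iff, THEN conjunct2, THEN conjunct2, rule_format, OF Id_x(1) g] Id_x
    by simp
qed

lemma L_wedge_eq_Id_snd:
  assumes \<eta>: "is_L_wedge c \<eta>" and f: "f \<in> Arr R1" and y: "y \<in> Obj R2"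
  shows "Comp C (Fa (upE A (L1a f), Id B (L2o y))) (\<eta> (Dom R1 f, y))
       = Comp C (Fa (upM A (L1a f), Id B (L2o y))) (\<eta> (Cod R1 f, y))"
proof -
  have Id_y: "Id R2 y \<in> Arr R2" "Dom R2 (Id R2 y) = y" "Cod R2 (Id R2 y) = y"
    using cat_id_hom[OF R2 y] by (simp_all add: hom_def)
  have "upE B (L2a (Id R2 y)) = Id B (L2o y)" "upM B (L2a (Id R2 y)) = Id B (L2o y)"
    using functor_Id[OF L2 y] Id_factorizations[OF B functor_obj[OF L2 y]] by simp_all
  then show ?thesis
    using \<eta>[unfolded is_L_wedge_iff, THEN conjunct2, THEN conjunct2, rule_format, OF f Id_y(1)] Id_y
    by simp
qed

lemma slice_wedge:
  assumes \<eta>: "is_L_wedge c \<eta>" and y: "y \<in> Obj R2"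
  shows "is_wedge A C (\<lambda>x. Fo (x, L2o y)) (\<lambda>f. Fa (f, Id B (L2o y))) R1 L1o L1a c (\<lambda>x. \<eta> (x, y))"
  using \<eta>[unfolded is_L_wedge_iff] L_wedge_eq_Id_snd[OF \<eta> _ y] y unfolding is_wedge_def by blast

definition mediating_fam :: "'oc \<Rightarrow> ('r1 \<times> 'r2 \<Rightarrow> 'ac) \<Rightarrow> 'r2 \<Rightarrow> 'ac" where
  "mediating_fam c \<eta> =
     (\<lambda>y\<in>Obj R2. THE h. wedge_morph C R1 c (\<lambda>x. \<eta> (x, y)) (Eo (L2o y)) (\<omega> (L2o y)) h)"

lemma mediating_fam_morph:
  assumes \<eta>: "is_L_wedge c \<eta>" and y: "y \<in> Obj R2"
  shows "wedge_morph C R1 c (\<lambda>x. \<eta> (x, y)) (Eo (L2o y)) (\<omega> (L2o y)) (mediating_fam c \<eta> y)"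
proof -
  have "\<exists>!h. wedge_morph C R1 c (\<lambda>x. \<eta> (x, y)) (Eo (L2o y)) (\<omega> (L2o y)) h"
    using omega_end[OF functor_obj[OF L2 y]] slice_wedge[OF \<eta> y] by (simp add: is_end_def)
  then show ?thesis
    unfolding mediating_fam_def using y by (simp add: theI')
qed

lemma mediating_fam_hom: "is_L_wedge c \<eta> \<Longrightarrow> y \<in> Obj R2 \<Longrightarrow> mediating_fam c \<eta> y \<in> hom C c (Eo (L2o y))"
  and omega_mediating_fam: "is_L_wedge c \<eta> \<Longrightarrow> y \<in> Obj R2 \<Longrightarrow> x \<in> Obj R1 \<Longrightarrow>
    Comp C (\<omega> (L2o y) x) (mediating_fam c \<eta> y) = \<eta> (x, y)"
  using mediating_fam_morph by (simp_all add: wedge_morph_def)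

lemma tilde_mediating_fam:
  "is_L_wedge c \<eta> \<Longrightarrow> p \<in> Obj R1 \<times> Obj R2 \<Longrightarrow> tilde (mediating_fam c \<eta>) p = \<eta> p"
  using omega_mediating_fam by (auto simp: tilde_fam_def)

lemma mediating_fam_wedge:
  assumes \<eta>: "is_L_wedge c \<eta>"
  shows "is_L2_wedge c (mediating_fam c \<eta>)"
  unfolding is_wedge_def
proof (intro conjI ballI)
  show "c \<in> Obj C" using \<eta> by (simp add: is_wedge_def)
next
  fix y assume "y \<in> Obj R2"
  then show "mediating_fam c \<eta> y \<in> hom C c (Eo (L2o y))" by (rule mediating_fam_hom[OF \<eta>])
next
  fix g assume g: "g \<in> Arr R2"
  define b \<mu> where "b = L2a g" and "\<mu> = mediating_fam c \<eta>"
  have b: "b \<in> Arr B" "Dom B b = L2o (Dom R2 g)" "Cod B b = L2o (Cod R2 g)"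
    using functor_hom[OF L2 g] unfolding b_def by (simp_all add: hom_def)
  note fac_b = upM_upE_factorization[OF B b(1)] upE_upM_Arr[OF B b(1)]
  have y: "Dom R2 g \<in> Obj R2" "Cod R2 g \<in> Obj R2"
    using cat_dom_obj[OF R2 g] cat_cod_obj[OF R2 g] .
  have \<mu>_hom: "\<mu> (Dom R2 g) \<in> hom C c (Eo (Dom B (upE B b)))"
    "\<mu> (Cod R2 g) \<in> hom C c (Eo (Cod B (upM B b)))"
    using mediating_fam_hom[OF \<eta>] y fac_b b unfolding \<mu>_def by simp_all
  have "Comp C (Ea (upE B b)) (\<mu> (Dom R2 g)) = Comp C (Ea (upM B b)) (\<mu> (Cod R2 g))"
  proof (rule omega_jointly_monic[OF cat_cod_obj[OF cat_B fac_b(5)]])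
    show "Comp C (Ea (upE B b)) (\<mu> (Dom R2 g)) \<in> hom C c (Eo (Cod B (upE B b)))"
      using cat_comp_hom[OF C \<mu>_hom(1) vfunctor_Cov_hom[OF B E fac_b(2)]] .
    show "Comp C (Ea (upM B b)) (\<mu> (Cod R2 g)) \<in> hom C c (Eo (Cod B (upE B b)))"
      using cat_comp_hom[OF C \<mu>_hom(2) vfunctor_Con_hom[OF B E fac_b(1)]] fac_b(3) by simp
  next
    fix x assume x: "x \<in> Obj R1"
    have "Comp C (\<omega> (Cod B (upE B b)) x) (Comp C (Ea (upE B b)) (\<mu> (Dom R2 g)))
        = Comp C (Fa (Id A (L1o x), upE B b)) (\<eta> (x, Dom R2 g))"
      using omega_natural_Cov[OF x fac_b(2) \<mu>_hom(1)] omega_mediating_fam[OF \<eta> y(1) x] fac_b b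
      unfolding \<mu>_def by simp
    also have "\<dots> = Comp C (Fa (Id A (L1o x), upM B b)) (\<eta> (x, Cod R2 g))"
      using L_wedge_eq_Id_fst[OF \<eta> x g] unfolding b_def .
    also have "\<dots> = Comp C (\<omega> (Cod B (upE B b)) x) (Comp C (Ea (upM B b)) (\<mu> (Cod R2 g)))"
      using omega_natural_Con[OF x fac_b(1) \<mu>_hom(2)] omega_mediating_fam[OF \<eta> y(2) x] fac_b b
      unfolding \<mu>_def by simp
    finally show "Comp C (\<omega> (Cod B (upE B b)) x) (Comp C (Ea (upE B b)) (\<mu> (Dom R2 g)))
        = Comp C (\<omega> (Cod B (upE B b)) x) (Comp C (Ea (upM B b)) (\<mu> (Cod R2 g)))" .
  qed
  then show "Comp C (Ea (upE B (L2a g))) (mediating_fam c \<eta> (Dom R2 g))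
      = Comp C (Ea (upM B (L2a g))) (mediating_fam c \<eta> (Cod R2 g))"
    unfolding b_def \<mu>_def .
qed

lemma tilde_comp:
  assumes "is_L2_wedge d \<theta>" "x \<in> Obj R1" "y \<in> Obj R2" "h \<in> hom C c d"
  shows "Comp C (tilde \<theta> (x, y)) h = Comp C (\<omega> (L2o y) x) (Comp C (\<theta> y) h)"
  using assms cat_comp_assoc[OF C _ _ omega_hom[OF functor_obj[OF L2 assms(3)] assms(2)]]
  by (simp add: tilde_fam_def is_wedge_def)

lemma wedge_morph_tilde_iff:
  assumes \<theta>: "is_L2_wedge c \<theta>" and \<theta>': "is_L2_wedge d \<theta>'"
  shows "wedge_morph C R2 c \<theta> d \<theta>' h \<longleftrightarrow> wedge_morph C (prod_cat R1 R2) c (tilde \<theta>) d (tilde \<theta>') h"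
proof
  assume "wedge_morph C R2 c \<theta> d \<theta>' h"
  then show "wedge_morph C (prod_cat R1 R2) c (tilde \<theta>) d (tilde \<theta>') h"
    using tilde_comp[OF \<theta>'] by (auto simp: wedge_morph_def tilde_fam_def)
next
  assume h: "wedge_morph C (prod_cat R1 R2) c (tilde \<theta>) d (tilde \<theta>') h"
  then have h_hom: "h \<in> hom C c d" by (simp add: wedge_morph_def)
  have "Comp C (\<theta>' y) h = \<theta> y" if y: "y \<in> Obj R2" for y
  proof (rule omega_jointly_monic[OF functor_obj[OF L2 y]])
    show "Comp C (\<theta>' y) h \<in> hom C c (Eo (L2o y))" "\<theta> y \<in> hom C c (Eo (L2o y))"
      using h \<theta> \<theta>' y cat_comp_hom[OF C] by (auto simp: wedge_morph_def is_wedge_def)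
  next
    fix x assume x: "x \<in> Obj R1"
    have "Comp C (tilde \<theta>' (x, y)) h = tilde \<theta> (x, y)"
      using h x y by (simp add: wedge_morph_def)
    then show "Comp C (\<omega> (L2o y) x) (Comp C (\<theta>' y) h) = Comp C (\<omega> (L2o y) x) (\<theta> y)"
      using tilde_comp[OF \<theta>' x y h_hom] x y by (simp add: tilde_fam_def)
  qed
  then show "wedge_morph C R2 c \<theta> d \<theta>' h"
    using h by (simp add: wedge_morph_def)
qed

lemma tilde_eqD:
  assumes \<theta>: "is_L2_wedge c \<theta>" and \<theta>': "is_L2_wedge c \<theta>'"
    and eq: "\<And>p. p \<in> Obj R1 \<times> Obj R2 \<Longrightarrow> tilde \<theta> p = tilde \<theta>' p" and y: "y \<in> Obj R2"
  shows "\<theta> y = \<theta>' y"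
proof (rule omega_jointly_monic[OF functor_obj[OF L2 y]])
  show "\<theta> y \<in> hom C c (Eo (L2o y))" "\<theta>' y \<in> hom C c (Eo (L2o y))"
    using \<theta> \<theta>' y by (simp_all add: is_wedge_def)
next
  fix x assume "x \<in> Obj R1"
  then show "Comp C (\<omega> (L2o y) x) (\<theta> y) = Comp C (\<omega> (L2o y) x) (\<theta>' y)"
    using eq[of "(x, y)"] y by (simp add: tilde_fam_def)
qed

lemma tilde_obj_bij:
  "bij_betw (tilde_obj C R1 R2 L2o \<omega>) (Obj (wedge_cat B C Eo Ea R2 L2o L2a))
     (Obj (wedge_cat (prod_vcat A B) C Fo Fa (prod_cat R1 R2) L12o L12a))"
  unfolding bij_betw_def
proof (intro conjI)
  show "inj_on (tilde_obj C R1 R2 L2o \<omega>) (Obj (wedge_cat B C Eo Ea R2 L2o L2a))"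
  proof (rule inj_onI, clarsimp simp: wedge_cat_simps tilde_obj_def)
    fix c \<theta> \<theta>' assume \<theta>: "is_L2_wedge c \<theta>" "\<theta> \<in> extensional (Obj R2)"
      and \<theta>': "is_L2_wedge c \<theta>'" "\<theta>' \<in> extensional (Obj R2)" and eq: "tilde \<theta> = tilde \<theta>'"
    show "\<theta> = \<theta>'"
      using tilde_eqD[OF \<theta>(1) \<theta>'(1)] eq by (intro extensionalityI[OF \<theta>(2) \<theta>'(2)]) simp
  qed
  show "tilde_obj C R1 R2 L2o \<omega> ` Obj (wedge_cat B C Eo Ea R2 L2o L2a)
      = Obj (wedge_cat (prod_vcat A B) C Fo Fa (prod_cat R1 R2) L12o L12a)"
  proof (intro equalityI subsetI)
    fix w assume "w \<in> tilde_obj C R1 R2 L2o \<omega> ` Obj (wedge_cat B C Eo Ea R2 L2o L2a)"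
    then show "w \<in> Obj (wedge_cat (prod_vcat A B) C Fo Fa (prod_cat R1 R2) L12o L12a)"
      using tilde_wedge by (auto simp: wedge_cat_simps tilde_obj_def tilde_fam_def)
  next
    fix w assume "w \<in> Obj (wedge_cat (prod_vcat A B) C Fo Fa (prod_cat R1 R2) L12o L12a)"
    then obtain c \<eta> where w: "w = (c, \<eta>)" "is_L_wedge c \<eta>" "\<eta> \<in> extensional (Obj R1 \<times> Obj R2)"
      by (auto simp: wedge_cat_simps)
    have "tilde (mediating_fam c \<eta>) = \<eta>"
      using tilde_mediating_fam[OF w(2)] w(3)
      by (intro extensionalityI[where A = "Obj R1 \<times> Obj R2"]) (simp_all add: tilde_fam_def)
    moreover have "(c, mediating_fam c \<eta>) \<in> Obj (wedge_cat B C Eo Ea R2 L2o L2a)"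
      using mediating_fam_wedge[OF w(2)] by (simp add: wedge_cat_simps mediating_fam_def)
    ultimately show "w \<in> tilde_obj C R1 R2 L2o \<omega> ` Obj (wedge_cat B C Eo Ea R2 L2o L2a)"
      using w(1) by (force simp: tilde_obj_def)
  qed
qed

lemma wedge_cat_tilde_iso:
  "is_cat_iso (wedge_cat B C Eo Ea R2 L2o L2a)
     (wedge_cat (prod_vcat A B) C Fo Fa (prod_cat R1 R2) L12o L12a)
     (tilde_obj C R1 R2 L2o \<omega>) (tilde_arr C R1 R2 L2o \<omega>)"
proof -
  have tilde_arr_eq: "tilde_arr C R1 R2 L2o \<omega>
      = (\<lambda>(v, w, h). (tilde_obj C R1 R2 L2o \<omega> v, tilde_obj C R1 R2 L2o \<omega> w, h))"
    by (rule ext) (simp add: tilde_arr_def)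
  show ?thesis
    unfolding tilde_arr_eq using tilde_obj_bij wedge_morph_tilde_iff
    by (intro wedge_cat_iso) (auto simp: wedge_cat_simps tilde_obj_def)
qed

lemma tilde_end:
  assumes e: "is_end B C Eo Ea R2 L2o L2a c \<theta>"
  shows "is_end (prod_vcat A B) C Fo Fa (prod_cat R1 R2) L12o L12a c (tilde \<theta>)"
proof -
  have \<theta>: "is_L2_wedge c \<theta>" using e by (simp add: is_end_def)
  have "\<exists>!h. wedge_morph C (prod_cat R1 R2) d \<eta> c (tilde \<theta>) h" if \<eta>: "is_L_wedge d \<eta>" for d \<eta>
  proof -
    have "wedge_morph C (prod_cat R1 R2) d \<eta> c (tilde \<theta>) h
        \<longleftrightarrow> wedge_morph C (prod_cat R1 R2) d (tilde (mediating_fam d \<eta>)) c (tilde \<theta>) h" for h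
      using tilde_mediating_fam[OF \<eta>] by (intro wedge_morph_cong) auto
    also have "\<dots> h \<longleftrightarrow> wedge_morph C R2 d (mediating_fam d \<eta>) c \<theta> h" for h
      using wedge_morph_tilde_iff[OF mediating_fam_wedge[OF \<eta>] \<theta>] by simp
    finally show ?thesis
      using e mediating_fam_wedge[OF \<eta>] by (simp add: is_end_def)
  qed
  then show ?thesis
    using tilde_wedge[OF \<theta>] by (simp add: is_end_def)
qed

lemma end_mediating_fam:
  assumes e: "is_end (prod_vcat A B) C Fo Fa (prod_cat R1 R2) L12o L12a c \<eta>"
  shows "is_end B C Eo Ea R2 L2o L2a c (mediating_fam c \<eta>)"
proof -
  have \<eta>: "is_L_wedge c \<eta>" using e by (simp add: is_end_def)
  have "\<exists>!h. wedge_morph C R2 d \<theta> c (mediating_fam c \<eta>) h" if \<theta>: "is_L2_wedge d \<theta>" for d \<theta>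
  proof -
    have "wedge_morph C R2 d \<theta> c (mediating_fam c \<eta>) h
        \<longleftrightarrow> wedge_morph C (prod_cat R1 R2) d (tilde \<theta>) c (tilde (mediating_fam c \<eta>)) h" for h
      using wedge_morph_tilde_iff[OF \<theta> mediating_fam_wedge[OF \<eta>]] by simp
    also have "\<dots> h \<longleftrightarrow> wedge_morph C (prod_cat R1 R2) d (tilde \<theta>) c \<eta> h" for h
      using tilde_mediating_fam[OF \<eta>] by (intro wedge_morph_cong) auto
    finally show ?thesis
      using e tilde_wedge[OF \<theta>] by (simp add: is_end_def)
  qed
  then show ?thesis
    using mediating_fam_wedge[OF \<eta>] by (simp add: is_end_def)
qed

end


theorem mainTheorem6:
  fixes A :: "('oa,'aa,'za) vcat_scheme" and B :: "('ob,'ab,'zb) vcat_scheme"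
    and C :: "('oc,'ac,'zc) cat_scheme"
    and R1 :: "('r1,'b1,'z1) cat_scheme" and R2 :: "('r2,'b2,'z2) cat_scheme"
    and L1o :: "'r1 \<Rightarrow> 'oa" and L1a :: "'b1 \<Rightarrow> 'aa"
    and L2o :: "'r2 \<Rightarrow> 'ob" and L2a :: "'b2 \<Rightarrow> 'ab"
    and Fo :: "'oa \<times> 'ob \<Rightarrow> 'oc" and Fa :: "'aa \<times> 'ab \<Rightarrow> 'ac"
    and Eo :: "'ob \<Rightarrow> 'oc" and \<omega> :: "'ob \<Rightarrow> 'r1 \<Rightarrow> 'ac"
    and Ea :: "'ab \<Rightarrow> 'ac"
  assumes A: "is_variance A" and B: "is_variance B" and C: "is_cat C"
    and R1: "is_cat R1" and R2: "is_cat R2"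
    and L1: "is_functor R1 A L1o L1a" and L2: "is_functor R2 B L2o L2a"
    and F: "is_vfunctor (prod_vcat A B) C Fo Fa"
    and ends: "\<forall>b\<in>Obj B. is_end A C (\<lambda>x. Fo (x, b)) (\<lambda>f. Fa (f, Id B b)) R1 L1o L1a (Eo b) (\<omega> b)"
    and E: "is_vfunctor B C Eo Ea"
    and E_nat: "\<forall>x\<in>Obj R1. \<forall>g\<in>Arr B.
        Comp C (Fa (Id A (L1o x), g)) (\<omega> (vsrc B g) x) = Comp C (\<omega> (vtgt B g) x) (Ea g)"
  shows
    "is_cat_iso (wedge_cat B C Eo Ea R2 L2o L2a)
        (wedge_cat (prod_vcat A B) C Fo Fa (prod_cat R1 R2)
           (\<lambda>(x,y). (L1o x, L2o y)) (\<lambda>(f,g). (L1a f, L2a g)))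
        (tilde_obj C R1 R2 L2o \<omega>) (tilde_arr C R1 R2 L2o \<omega>)
   \<and> (has_end (prod_vcat A B) C Fo Fa (prod_cat R1 R2)
           (\<lambda>(x,y). (L1o x, L2o y)) (\<lambda>(f,g). (L1a f, L2a g))
       \<longleftrightarrow> has_end B C Eo Ea R2 L2o L2a)
   \<and> (\<forall>c \<theta>. is_end B C Eo Ea R2 L2o L2a c \<theta> \<longrightarrow>
        is_end (prod_vcat A B) C Fo Fa (prod_cat R1 R2)
           (\<lambda>(x,y). (L1o x, L2o y)) (\<lambda>(f,g). (L1a f, L2a g)) c (tilde_fam C R1 R2 L2o \<omega> \<theta>))
   \<and> (\<forall>c \<eta>. is_end (prod_vcat A B) C Fo Fa (prod_cat R1 R2)
           (\<lambda>(x,y). (L1o x, L2o y)) (\<lambda>(f,g). (L1a f, L2a g)) c \<eta> \<longrightarrow>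
        (\<exists>\<theta>. is_end B C Eo Ea R2 L2o L2a c \<theta> \<and>
              (\<forall>p\<in>Obj R1 \<times> Obj R2. \<eta> p = tilde_fam C R1 R2 L2o \<omega> \<theta> p)))"
proof -
  interpret iterated_end A B C R1 R2 L1o L1a L2o L2a Fo Fa Eo \<omega> Ea
    by (rule iterated_end.intro) (fact assms)+
  have "\<forall>c \<eta>. is_end (prod_vcat A B) C Fo Fa (prod_cat R1 R2) L12o L12a c \<eta> \<longrightarrow>
      (\<exists>\<theta>. is_end B C Eo Ea R2 L2o L2a c \<theta> \<and> (\<forall>p\<in>Obj R1 \<times> Obj R2. \<eta> p = tilde \<theta> p))"
    using end_mediating_fam tilde_mediating_fam by (metis is_end_def)
  then show ?thesis
    using wedge_cat_tilde_iso tilde_end unfolding has_end_def by blast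
qed

end
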